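(* Let $\epsilon\in(0,1)$ and let $D$ be a joint distribution of $(\mathbf{x},y)$ on $\mathbb{R}^d\times\{\pm1\}$ with $\mathbf{x}$-marginal $\mathcal{N}_d$. Suppose $D$ satisfies the reliability condition with respect to $f(\mathbf{x})=\mathrm{sign}(\langle\mathbf{w}^*,\mathbf{x}\rangle-t^* )$, with $\mathbf{w}^*$ a unit vector. Let $\mathbf{w}$ be a unit vector with $\langle\mathbf{w},\mathbf{w}^*\rangle>0$, let $t$ satisfy $t-t^*\in[0,\epsilon/100]$, and suppose $h(\mathbf{x})=\mathrm{sign}(\langle\mathbf{w},\mathbf{x}\rangle-t)$ does not satisfy $R_+(h;D)\le\epsilon/2$. Let $B=\{\mathbf{x}\in\mathbb{R}^d:\langle\mathbf{w},\mathbf{x}\rangle-t\ge0\}$ and let $D'$ be the distribution of $(\mathbf{x}',y)=(\mathbf{x}^{\perp\mathbf{w}},y)$ for $(\mathbf{x},y)\sim D$ conditioned on $\mathbf{x}\in B$. Then: (1) $D'$ has $\mathbf{x}'$-marginal $\mathcal{N}_{d-1}$; (2) $D'$ satisfies the reliability condition with respect to $h'(\mathbf{x})=\mathrm{sign}(\langle\mathbf{w}',\mathbf{x}\rangle-t')$ for $\mathbf{w}'={\mathbf{w}^*}^{\perp\mathbf{w}}/\|{\mathbf{w}^*}^{\perp\mathbf{w}}\|_2$ and some $t'$ with $|t'|\le|t^*|$; (3) $\Pr_{(\mathbf{x}',y)\sim D'}[y=-1]\ge\epsilon/2$.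
   Context: A distribution $D$ on $X\times\{\pm1\}$ satisfies the reliability condition with respect to $f$ if $\Pr_{(\mathbf{x},y)\sim D}[f(\mathbf{x})=+1\wedge y=-1]=0$. $R_+(h;D)=\Pr_{(\mathbf{x},y)\sim D}[h(\mathbf{x})=1\wedge y=-1]$. For $\mathbf{x}\in\mathbb{R}^d$ and a unit vector $\mathbf{w}$, $\mathbf{x}^{\perp\mathbf{w}}\in\mathbb{R}^{d-1}$ denotes the coordinates, with respect to a fixed orthonormal basis $\mathbf{B}$ of the orthogonal complement of $\mathbf{w}$, of the projection of $\mathbf{x}$ onto that complement, i.e. $\mathbf{x}^{\perp\mathbf{w}}=\mathbf{B}^\top\mathbf{x}$. *)

theory Defs
  imports "HOL-Probability.Probability"
begin

text \<open>Sign convention: sign(z) = +1 for z \<ge> 0 and -1 otherwise (matching the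
  halfspace B = {x. w.x - t \<ge> 0} on which h = +1).\<close>
definition hsign :: "real \<Rightarrow> real" where
  "hsign z = (if z \<ge> 0 then 1 else -1)"

definition std_gaussian :: "'a::euclidean_space measure" where
  "std_gaussian = density lborel
     (\<lambda>x. ennreal ((2 * pi) powr (- real DIM('a) / 2) * exp (- (norm x)\<^sup>2 / 2)))"

definition reliable :: "('a \<times> real) measure \<Rightarrow> ('a \<Rightarrow> real) \<Rightarrow> bool" where
  "reliable D f \<longleftrightarrow> measure D {(x, y). f x = 1 \<and> y = -1} = 0"

definition R_plus :: "('a \<Rightarrow> real) \<Rightarrow> ('a \<times> real) measure \<Rightarrow> real" where
  "R_plus h D = measure D {(x, y). h x = 1 \<and> y = -1}"

text \<open>Coordinates of the projection onto the orthogonal complement of w w.r.t. the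
  orthonormal basis {b i | i \<in> Basis}: x^{\<perp>w} = B^T x.\<close>
definition perp_coords :: "('b::euclidean_space \<Rightarrow> 'a::euclidean_space) \<Rightarrow> 'a \<Rightarrow> 'b" where
  "perp_coords b x = (\<Sum>i\<in>Basis. (b i \<bullet> x) *\<^sub>R i)"

end

theory Submission
  imports Defs
begin

text \<open>In coordinates where \<open>w\<close> is the last axis, \<open>x \<mapsto> (x\<^sup>\<perp>, w \<bullet> x)\<close> is a linear isometry
  onto \<open>\<real>\<^sup>d\<^sup>-\<^sup>1 \<times> \<real>\<close>. Lebesgue measure, hence the standard Gaussian, is invariant under linear
  isometries, and the Gaussian density factorises over this product; so conditioning on the
  halfspace \<open>B = {x. w \<bullet> x \<ge> t}\<close> leaves \<open>x\<^sup>\<perp>\<close> standard Gaussian.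
  Decompose \<open>w\<^sup>* \<bullet> x = w\<^sup>*\<^sup>\<perp> \<bullet> x\<^sup>\<perp> + a (w \<bullet> x)\<close> with \<open>a = w \<bullet> w\<^sup>* > 0\<close> and
  \<open>c = norm w\<^sup>*\<^sup>\<perp> = sqrt (1 - a\<^sup>2)\<close>. For \<open>t' = t\<^sup>* (1 - a) / c\<close>, every \<open>x \<in> B\<close> with
  \<open>w' \<bullet> x\<^sup>\<perp> \<ge> t'\<close> has \<open>w\<^sup>* \<bullet> x \<ge> t\<^sup>* (1 - a) + a t\<^sup>* = t\<^sup>*\<close> because \<open>t\<^sup>* \<le> t\<close>; so
  the reliability of \<open>D\<close> is inherited, and \<open>|t'| \<le> |t\<^sup>*|\<close> because \<open>(1 - a)\<^sup>2 \<le> 1 - a\<^sup>2\<close>.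
  Finally, conditioning on \<open>B\<close> cannot decrease the probability of \<open>B \<times> {-1}\<close>, which exceeds
  \<open>\<epsilon>/2\<close> because \<open>h\<close> violates the reliability bound.\<close>

section \<open>Lebesgue measure is invariant under linear isometries\<close>

lemma lborel_distr_orthogonal_transformation:
  fixes Q :: "real^'n::{finite,wellorder} \<Rightarrow> real^'n::_"
  assumes Q: "orthogonal_transformation Q"
  shows "distr lborel borel Q = lborel"
proof (rule lborel_eqI[symmetric])
  have "linear Q" using Q orthogonal_transformation_linear by blast
  then have [measurable]: "Q \<in> borel_measurable borel"
    by (simp add: borel_measurable_continuous_onI linear_continuous_on linear_conv_bounded_linear)
  have Q': "orthogonal_transformation (inv Q)" using Q orthogonal_transformation_inv by blast
  have vimage_eq: "Q -` S = inv Q ` S" for S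
    using Q orthogonal_transformation_bij bij_vimage_eq_inv_image by blast
  fix l u :: "real^'n::_" assume le: "\<And>b. b \<in> Basis \<Longrightarrow> l \<bullet> b \<le> u \<bullet> b"
  have "Q -` box l u \<in> sets borel"
    using measurable_sets_borel[of Q borel "box l u"] by simp
  then have "emeasure (distr lborel borel Q) (box l u) = emeasure lebesgue (Q -` box l u)"
    by (simp add: emeasure_distr)
  also have "\<dots> = measure lebesgue (box l u)"
    unfolding vimage_eq using measurable_orthogonal_image[OF Q' lmeasurable_box] measure_orthogonal_image[OF Q' lmeasurable_box]
    by (simp add: emeasure_eq_measure2)
  also have "\<dots> = (\<Prod>b\<in>Basis. (u - l) \<bullet> b)"
    using le by (simp add: emeasure_eq_measure2[symmetric] emeasure_lborel_box_eq box_eq_empty inner_diff_left prod_nonneg)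
  finally show "emeasure (distr lborel borel Q) (box l u) = (\<Prod>b\<in>Basis. (u - l) \<bullet> b)" .
qed simp

definition basis_transfer :: "('a::euclidean_space \<Rightarrow> 'b::euclidean_space) \<Rightarrow> 'a \<Rightarrow> 'b" where
  "basis_transfer \<pi> x = (\<Sum>j\<in>Basis. (x \<bullet> j) *\<^sub>R \<pi> j)"

lemma borel_measurable_basis_transfer[measurable]: "basis_transfer \<pi> \<in> borel_measurable borel"
  unfolding basis_transfer_def by measurable

lemma linear_basis_transfer: "linear (basis_transfer \<pi>)"
  by (rule linearI) (simp_all add: basis_transfer_def inner_add_left scaleR_add_left sum.distrib scaleR_sum_right)

lemma inner_basis_transfer:
  fixes \<pi> :: "'a::euclidean_space \<Rightarrow> 'b::euclidean_space"
  assumes \<pi>: "bij_betw \<pi> Basis Basis" and k: "k \<in> Basis"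
  shows "basis_transfer \<pi> x \<bullet> \<pi> k = x \<bullet> k"
proof -
  have "basis_transfer \<pi> x \<bullet> \<pi> k = (\<Sum>j\<in>Basis. (x \<bullet> j) * (\<pi> j \<bullet> \<pi> k))"
    unfolding basis_transfer_def by (simp add: inner_sum_left)
  also have "\<dots> = (\<Sum>j\<in>Basis. if j = k then x \<bullet> k else 0)"
  proof (rule sum.cong)
    fix j :: 'a assume j: "j \<in> Basis"
    have "\<pi> j \<in> Basis" "\<pi> k \<in> Basis" using \<pi> j k bij_betwE by blast+
    moreover have "\<pi> j = \<pi> k \<longleftrightarrow> j = k"
      using \<pi> j k by (metis bij_betw_def inj_on_eq_iff)
    ultimately show "(x \<bullet> j) * (\<pi> j \<bullet> \<pi> k) = (if j = k then x \<bullet> k else 0)"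
      by (auto simp: inner_Basis)
  qed simp
  finally show ?thesis using k by simp
qed

lemma norm_basis_transfer:
  fixes \<pi> :: "'a::euclidean_space \<Rightarrow> 'b::euclidean_space"
  assumes \<pi>: "bij_betw \<pi> Basis Basis"
  shows "norm (basis_transfer \<pi> x) = norm x"
proof -
  let ?y = "basis_transfer \<pi> x"
  have "?y \<bullet> ?y = (\<Sum>k\<in>Basis. (?y \<bullet> k) * (?y \<bullet> k))"
    by (rule euclidean_inner)
  also have "\<dots> = (\<Sum>j\<in>Basis. (?y \<bullet> \<pi> j) * (?y \<bullet> \<pi> (j::'a)))"
    using sum.reindex_bij_betw[OF \<pi>, of "\<lambda>k. (?y \<bullet> k) * (?y \<bullet> k)"] by simp
  also have "\<dots> = x \<bullet> x"
    by (simp add: inner_basis_transfer[OF \<pi>] euclidean_inner[of x x])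
  finally show ?thesis by (simp add: norm_eq_sqrt_inner)
qed

lemma basis_transfer_inverse:
  fixes \<pi> :: "'a::euclidean_space \<Rightarrow> 'b::euclidean_space"
  assumes \<pi>: "bij_betw \<pi> Basis Basis"
  shows "basis_transfer (inv_into Basis \<pi>) (basis_transfer \<pi> x) = x"
proof (rule euclidean_eqI)
  fix k :: 'a assume k: "k \<in> Basis"
  have "\<pi> k \<in> Basis" using \<pi> k bij_betwE by blast
  from inner_basis_transfer[OF bij_betw_inv_into[OF \<pi>] this]
  show "basis_transfer (inv_into Basis \<pi>) (basis_transfer \<pi> x) \<bullet> k = x \<bullet> k"
    using \<pi> k by (simp add: bij_betw_def inner_basis_transfer[OF \<pi> k])
qed

lemma lborel_distr_basis_transfer:
  fixes \<pi> :: "'a::euclidean_space \<Rightarrow> 'b::euclidean_space"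
  assumes \<pi>: "bij_betw \<pi> Basis Basis"
  shows "distr lborel borel (basis_transfer \<pi>) = lborel"
proof (rule lborel_eqI[symmetric])
  fix l u :: 'b assume le: "\<And>b. b \<in> Basis \<Longrightarrow> l \<bullet> b \<le> u \<bullet> b"
  define l' :: 'a where "l' = (\<Sum>j\<in>Basis. (l \<bullet> \<pi> j) *\<^sub>R j)"
  define u' :: 'a where "u' = (\<Sum>j\<in>Basis. (u \<bullet> \<pi> j) *\<^sub>R j)"
  have l': "l' \<bullet> j = l \<bullet> \<pi> j" and u': "u' \<bullet> j = u \<bullet> \<pi> j" if "j \<in> Basis" for j
    using that unfolding l'_def u'_def by (simp_all add: inner_sum_left inner_Basis if_distrib cong: if_cong)
  have in_box: "x \<in> box l u \<longleftrightarrow> (\<forall>j\<in>Basis. l \<bullet> \<pi> j < x \<bullet> \<pi> j \<and> x \<bullet> \<pi> j < u \<bullet> \<pi> j)" for x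
    unfolding mem_box using \<pi> bij_betw_imp_surj_on by (metis (no_types, lifting) image_eqI imageE)
  have "basis_transfer \<pi> -` box l u = box l' u'"
    unfolding set_eq_iff vimage_eq in_box by (simp add: mem_box inner_basis_transfer[OF \<pi>] l' u')
  then have "emeasure (distr lborel borel (basis_transfer \<pi>)) (box l u) = emeasure lborel (box l' u')"
    by (simp add: emeasure_distr)
  also have "\<dots> = (\<Prod>j\<in>Basis. (u - l) \<bullet> \<pi> j)"
    using le \<pi> by (subst emeasure_lborel_box) (auto simp: l' u' bij_betwE inner_diff_left intro!: prod.cong)
  also have "\<dots> = (\<Prod>k\<in>Basis. (u - l) \<bullet> k)"
    using prod.reindex_bij_betw[OF \<pi>, of "\<lambda>k. (u - l) \<bullet> k"] by simp
  finally show "emeasure (distr lborel borel (basis_transfer \<pi>)) (box l u) = (\<Prod>k\<in>Basis. (u - l) \<bullet> k)" .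
qed simp

text \<open>The change-of-variables library is stated for \<open>real^'n\<close> with \<open>'n::{finite,wellorder}\<close>; the
  index type below gives such a Cartesian space of the same dimension as any Euclidean space.\<close>

typedef (overloaded) ('a::euclidean_space) basis_index = "Basis :: 'a set"
  using nonempty_Basis by blast

instance basis_index :: (euclidean_space) finite
proof
  have "(UNIV :: 'a basis_index set) = Abs_basis_index ` Basis"
    using type_definition.Abs_image[OF type_definition_basis_index] by metis
  then show "finite (UNIV :: 'a basis_index set)" by (metis finite_Basis finite_imageI)
qed

lemma card_basis_index: "CARD('a::euclidean_space basis_index) = DIM('a)"
  using type_definition.card[OF type_definition_basis_index] by simp

instantiation basis_index :: (euclidean_space) wellorder
begin

definition less_eq_basis_index :: "'a basis_index \<Rightarrow> 'a basis_index \<Rightarrow> bool" where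
  "less_eq_basis_index i j \<longleftrightarrow> to_nat i \<le> to_nat j"

definition less_basis_index :: "'a basis_index \<Rightarrow> 'a basis_index \<Rightarrow> bool" where
  "less_basis_index i j \<longleftrightarrow> to_nat i < to_nat j"

instance
proof
  fix P :: "'a basis_index \<Rightarrow> bool" and a :: "'a basis_index"
  assume step: "\<And>i. (\<And>j. j < i \<Longrightarrow> P j) \<Longrightarrow> P i"
  show "P a"
  proof (induction a rule: measure_induct_rule[where f=to_nat])
    case (less i)
    then show ?case using step unfolding less_basis_index_def by blast
  qed
qed (auto simp: less_eq_basis_index_def less_basis_index_def inj_eq[OF inj_to_nat])

end

lemma lborel_distr_linear_isometry:
  fixes T :: "'a::euclidean_space \<Rightarrow> 'c::euclidean_space"
  assumes T: "linear T" and norm_T: "\<And>x. norm (T x) = norm x" and dim: "DIM('c) = DIM('a)"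
  shows "distr lborel borel T = lborel"
proof -
  let ?V = "Basis :: (real^'a basis_index) set"
  obtain \<pi>a where \<pi>a: "bij_betw \<pi>a (Basis::'a set) ?V"
    using finite_same_card_bij[of "Basis::'a set" ?V] by (auto simp: card_basis_index)
  obtain \<pi>c where \<pi>c: "bij_betw \<pi>c (Basis::'c set) ?V"
    using finite_same_card_bij[of "Basis::'c set" ?V] dim by (auto simp: card_basis_index)
  define from_a where "from_a = basis_transfer (inv_into Basis \<pi>a)"
  define to_c where "to_c = basis_transfer \<pi>c"
  define from_c where "from_c = basis_transfer (inv_into Basis \<pi>c)"
  define Q where "Q = to_c \<circ> T \<circ> from_a"
  have \<pi>a': "bij_betw (inv_into Basis \<pi>a) ?V Basis" using \<pi>a bij_betw_inv_into by blast
  have "linear Q"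
    unfolding Q_def to_c_def from_a_def by (intro linear_compose linear_basis_transfer T)
  moreover have "norm (Q v) = norm v" for v
    by (simp add: Q_def to_c_def from_a_def norm_basis_transfer[OF \<pi>c] norm_basis_transfer[OF \<pi>a'] norm_T)
  ultimately have "orthogonal_transformation Q"
    by (simp add: orthogonal_transformation)
  then have Q: "distr lborel borel Q = lborel"
    by (rule lborel_distr_orthogonal_transformation)
  have [measurable]: "Q \<in> borel_measurable borel"
    using \<open>linear Q\<close> by (simp add: borel_measurable_continuous_onI linear_continuous_on linear_conv_bounded_linear)
  have "T = (\<lambda>x. from_c (Q (basis_transfer \<pi>a x)))"
    by (auto simp: Q_def from_c_def to_c_def from_a_def basis_transfer_inverse[OF \<pi>a] basis_transfer_inverse[OF \<pi>c])
  then have "distr lborel borel T = distr (distr (distr lborel borel (basis_transfer \<pi>a)) borel Q) borel from_c"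
    by (simp add: distr_distr from_c_def comp_def)
  also have "\<dots> = lborel"
    unfolding from_c_def by (simp add: lborel_distr_basis_transfer[OF \<pi>a] Q lborel_distr_basis_transfer[OF bij_betw_inv_into[OF \<pi>c]])
  finally show ?thesis .
qed

section \<open>The standard Gaussian measure\<close>

definition gaussian_density :: "'a::euclidean_space \<Rightarrow> real" where
  "gaussian_density x = (2 * pi) powr (- real DIM('a) / 2) * exp (- (norm x)\<^sup>2 / 2)"

lemma std_gaussian_eq_density: "std_gaussian = density lborel (\<lambda>x. ennreal (gaussian_density x))"
  unfolding std_gaussian_def gaussian_density_def ..

lemma sets_std_gaussian[simp, measurable_cong]: "sets std_gaussian = sets borel"
  by (simp add: std_gaussian_eq_density)

lemma space_std_gaussian[simp]: "space std_gaussian = UNIV"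
  by (simp add: std_gaussian_eq_density)

lemma borel_measurable_gaussian_density[measurable]: "gaussian_density \<in> borel_measurable borel"
  unfolding gaussian_density_def by measurable

lemma gaussian_density_nonneg: "0 \<le> gaussian_density x"
  by (simp add: gaussian_density_def)

lemma gaussian_density_Pair:
  fixes x :: "'a::euclidean_space" and y :: "'b::euclidean_space"
  shows "gaussian_density (x, y) = gaussian_density x * gaussian_density y"
proof -
  have "(2 * pi) powr (- real (DIM('a) + DIM('b)) / 2)
      = (2 * pi) powr (- real DIM('a) / 2) * (2 * pi) powr (- real DIM('b) / 2)"
    by (subst powr_add[symmetric]) (simp add: field_simps)
  moreover have "exp (- (norm (x, y))\<^sup>2 / 2) = exp (- (norm x)\<^sup>2 / 2) * exp (- (norm y)\<^sup>2 / 2)"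
    by (simp add: norm_Pair exp_add[symmetric] field_simps)
  ultimately show ?thesis
    by (simp add: gaussian_density_def)
qed

lemma gaussian_density_eq_prod_Basis:
  fixes x :: "'a::euclidean_space"
  shows "gaussian_density x = (\<Prod>b\<in>Basis. std_normal_density (x \<bullet> b))"
proof -
  have "(2 * pi) powr (- real DIM('a) / 2) = ((2 * pi) powr (- 1 / 2)) powr real DIM('a)"
    by (simp add: powr_powr)
  also have "\<dots> = (1 / sqrt (2 * pi)) ^ DIM('a)"
    by (simp add: powr_realpow powr_minus_divide powr_half_sqrt)
  finally have const: "(2 * pi) powr (- real DIM('a) / 2) = (\<Prod>b\<in>(Basis::'a set). 1 / sqrt (2 * pi))"
    by simp
  have "(norm x)\<^sup>2 = (\<Sum>b\<in>Basis. (x \<bullet> b)\<^sup>2)"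
    unfolding power2_norm_eq_inner euclidean_inner[of x x] by (simp add: power2_eq_square)
  then have "exp (- (norm x)\<^sup>2 / 2) = exp (\<Sum>b\<in>Basis. - (x \<bullet> b)\<^sup>2 / 2)"
    by (simp add: sum_negf sum_divide_distrib)
  also have "\<dots> = (\<Prod>b\<in>Basis. exp (- (x \<bullet> b)\<^sup>2 / 2))"
    by (simp add: exp_sum)
  finally have expo: "exp (- (norm x)\<^sup>2 / 2) = (\<Prod>b\<in>Basis. exp (- (x \<bullet> b)\<^sup>2 / 2))" .
  have "gaussian_density x = (\<Prod>b\<in>(Basis::'a set). 1 / sqrt (2 * pi)) * (\<Prod>b\<in>Basis. exp (- (x \<bullet> b)\<^sup>2 / 2))"
    by (simp only: gaussian_density_def const expo)
  then show ?thesis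
    by (simp only: std_normal_density_def prod.distrib)
qed

lemma prob_space_std_gaussian: "prob_space (std_gaussian :: 'a::euclidean_space measure)"
proof
  have "emeasure (density lborel (\<lambda>s. ennreal (std_normal_density s))) UNIV = 1"
    using prob_space.emeasure_space_1[OF prob_space_normal_density[of 1 0]] by simp
  then have std_normal: "(\<integral>\<^sup>+s. ennreal (std_normal_density s) \<partial>lborel) = 1"
    by (simp add: emeasure_density)
  have "emeasure (std_gaussian :: 'a measure) UNIV = (\<integral>\<^sup>+(x::'a). (\<Prod>b\<in>Basis. ennreal (std_normal_density (x \<bullet> b))) \<partial>lborel)"
    by (simp add: std_gaussian_eq_density emeasure_density gaussian_density_eq_prod_Basis prod_ennreal)
  also have "\<dots> = 1"
    by (subst nn_integral_lborel_prod) (simp_all add: std_normal)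
  finally show "emeasure (std_gaussian :: 'a measure) (space std_gaussian) = 1"
    by simp
qed

lemma emeasure_std_gaussian_Times:
  fixes A :: "'a::euclidean_space set" and C :: "'b::euclidean_space set"
  assumes [measurable]: "A \<in> sets borel" "C \<in> sets borel"
  shows "emeasure (std_gaussian :: ('a \<times> 'b) measure) (A \<times> C) = emeasure std_gaussian A * emeasure std_gaussian C"
proof -
  have AC: "A \<times> C \<in> sets (borel :: ('a \<times> 'b) measure)"
    unfolding borel_prod[symmetric] by simp
  have "emeasure (std_gaussian :: ('a \<times> 'b) measure) (A \<times> C)
      = (\<integral>\<^sup>+p. ennreal (gaussian_density p) * indicator (A \<times> C) p \<partial>(lborel \<Otimes>\<^sub>M lborel))"
    using AC by (simp add: std_gaussian_eq_density emeasure_density lborel_prod)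
  also have "\<dots> = (\<integral>\<^sup>+x. \<integral>\<^sup>+y. ennreal (gaussian_density (x, y)) * indicator (A \<times> C) (x, y) \<partial>lborel \<partial>lborel)"
    using AC by (intro lborel.nn_integral_fst[symmetric]) (simp add: lborel_prod measurable_lborel1)
  also have "\<dots> = (\<integral>\<^sup>+x. (ennreal (gaussian_density x) * indicator A x)
      * (\<integral>\<^sup>+y. ennreal (gaussian_density y) * indicator C y \<partial>lborel) \<partial>lborel)"
  proof (rule nn_integral_cong)
    fix x :: 'a
    have "(\<integral>\<^sup>+y. ennreal (gaussian_density (x, y)) * indicator (A \<times> C) (x, y) \<partial>lborel)
        = (\<integral>\<^sup>+y. (ennreal (gaussian_density x) * indicator A x) * (ennreal (gaussian_density y) * indicator C y) \<partial>lborel)"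
      by (simp add: gaussian_density_Pair ennreal_mult gaussian_density_nonneg indicator_times mult_ac)
    also have "\<dots> = (ennreal (gaussian_density x) * indicator A x) * (\<integral>\<^sup>+y. ennreal (gaussian_density y) * indicator C y \<partial>lborel)"
      by (rule nn_integral_cmult) measurable
    finally show "(\<integral>\<^sup>+y. ennreal (gaussian_density (x, y)) * indicator (A \<times> C) (x, y) \<partial>lborel) = \<dots>" .
  qed
  also have "\<dots> = (\<integral>\<^sup>+x. ennreal (gaussian_density x) * indicator A x \<partial>lborel) * (\<integral>\<^sup>+y. ennreal (gaussian_density y) * indicator C y \<partial>lborel)"
    by (rule nn_integral_multc) measurable
  also have "\<dots> = emeasure std_gaussian A * emeasure std_gaussian C"
    by (simp add: std_gaussian_eq_density emeasure_density)
  finally show ?thesis .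
qed

lemma distr_std_gaussian_linear_isometry:
  fixes T :: "'a::euclidean_space \<Rightarrow> 'c::euclidean_space"
  assumes T: "linear T" and norm_T: "\<And>x. norm (T x) = norm x" and dim: "DIM('c) = DIM('a)"
  shows "distr std_gaussian borel T = std_gaussian"
proof -
  have [measurable]: "T \<in> borel_measurable borel"
    using T by (simp add: borel_measurable_continuous_onI linear_continuous_on linear_conv_bounded_linear)
  have density_T: "gaussian_density (T x) = gaussian_density x" for x
    by (simp add: gaussian_density_def norm_T dim)
  have "std_gaussian = density (distr lborel borel T) (\<lambda>y. ennreal (gaussian_density y))"
    by (simp add: lborel_distr_linear_isometry[OF assms] std_gaussian_eq_density)
  also have "\<dots> = distr (density lborel (\<lambda>x. ennreal (gaussian_density (T x)))) borel T"
    by (rule density_distr) measurable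
  finally show ?thesis
    by (simp add: density_T std_gaussian_eq_density)
qed

section \<open>Coordinates adapted to a unit vector\<close>

lemma borel_measurable_perp_coords[measurable]: "perp_coords b \<in> borel_measurable borel"
  unfolding perp_coords_def by measurable

lemma perp_coords_inner_Basis: "k \<in> Basis \<Longrightarrow> perp_coords b x \<bullet> k = b k \<bullet> x"
  unfolding perp_coords_def by (simp add: inner_sum_left inner_Basis if_distrib cong: if_cong)

lemma linear_perp_coords: "linear (perp_coords b)"
  by (rule linearI) (simp_all add: perp_coords_def inner_add_right scaleR_add_left sum.distrib scaleR_sum_right)

lemma abs_threshold_le:
  fixes a c s :: real
  assumes "0 < a" "0 \<le> c" and sum_squares: "c\<^sup>2 + a\<^sup>2 = 1"
  shows "\<bar>s * (1 - a) / c\<bar> \<le> \<bar>s\<bar>"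
proof (cases "c = 0")
  case False
  have "a\<^sup>2 \<le> 1"
    using sum_squares zero_le_power2[of c] by linarith
  then have "a \<le> 1"
    by (intro power2_le_imp_le[of a 1]) simp_all
  then have "a * a \<le> a"
    using \<open>0 < a\<close> by (simp add: mult_left_le)
  then have "(1 - a)\<^sup>2 \<le> c\<^sup>2"
    using sum_squares by (simp add: power2_eq_square algebra_simps)
  then have "1 - a \<le> c"
    using \<open>0 \<le> c\<close> by (rule power2_le_imp_le)
  have "\<bar>s * (1 - a) / c\<bar> = \<bar>s\<bar> * ((1 - a) / c)"
    using \<open>a \<le> 1\<close> \<open>0 \<le> c\<close> by (simp add: abs_mult)
  also have "\<dots> \<le> \<bar>s\<bar>"
    using \<open>1 - a \<le> c\<close> \<open>a \<le> 1\<close> \<open>0 \<le> c\<close> False by (intro mult_left_le[of _ "\<bar>s\<bar>"]) auto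
  finally show ?thesis .
qed simp

locale orthonormal_frame =
  fixes b :: "'b::euclidean_space \<Rightarrow> 'a::euclidean_space" and w :: 'a
  assumes norm_w: "norm w = 1"
    and dim: "DIM('a) = DIM('b) + 1"
    and orthogonal_b_w: "\<forall>i\<in>Basis. b i \<bullet> w = 0"
    and orthonormal_b: "\<forall>i\<in>Basis. \<forall>j\<in>Basis. b i \<bullet> b j = (if i = j then 1 else 0)"
begin

definition frame_coords :: "'a \<Rightarrow> 'b \<times> real" where
  "frame_coords x = (perp_coords b x, w \<bullet> x)"

definition frame_point :: "'b \<times> real \<Rightarrow> 'a" where
  "frame_point p = (\<Sum>i\<in>Basis. (fst p \<bullet> i) *\<^sub>R b i) + snd p *\<^sub>R w"

lemma linear_frame_coords: "linear frame_coords"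
  unfolding frame_coords_def
  by (rule linearI) (simp_all add: linear_add[OF linear_perp_coords] linear_scale[OF linear_perp_coords] inner_add_right)

lemma linear_frame_point: "linear frame_point"
  by (rule linearI)
     (simp_all add: frame_point_def inner_add_left scaleR_add_left sum.distrib scaleR_sum_right algebra_simps)

lemma inner_frame_point: "u \<bullet> frame_point p = perp_coords b u \<bullet> fst p + (w \<bullet> u) * snd p"
proof -
  have "(\<Sum>i\<in>Basis. (fst p \<bullet> i) * (u \<bullet> b i)) = perp_coords b u \<bullet> fst p"
    unfolding euclidean_inner[of "perp_coords b u" "fst p"]
  proof (rule sum.cong[OF refl])
    fix i :: 'b assume "i \<in> Basis"
    then show "(fst p \<bullet> i) * (u \<bullet> b i) = (perp_coords b u \<bullet> i) * (fst p \<bullet> i)"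
      by (simp add: perp_coords_inner_Basis inner_commute[of u "b i"])
  qed
  then show ?thesis
    by (simp add: frame_point_def inner_add_right inner_sum_right inner_commute[of u w])
qed

lemma frame_coords_point: "frame_coords (frame_point p) = p"
proof -
  have perp_b: "perp_coords b (b k) = k" if "k \<in> Basis" for k
    by (rule euclidean_eqI) (simp add: perp_coords_inner_Basis inner_Basis that orthonormal_b)
  have perp_w: "perp_coords b w = 0"
    by (rule euclidean_eqI) (simp add: perp_coords_inner_Basis orthogonal_b_w)
  have "perp_coords b (frame_point p) = fst p"
  proof (rule euclidean_eqI)
    fix k :: 'b assume "k \<in> Basis"
    then have "perp_coords b (frame_point p) \<bullet> k = b k \<bullet> frame_point p"
      by (rule perp_coords_inner_Basis)
    also have "\<dots> = fst p \<bullet> k"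
      using \<open>k \<in> Basis\<close> orthogonal_b_w by (simp add: inner_frame_point perp_b inner_commute[of w "b k"] inner_commute[of k "fst p"])
    finally show "perp_coords b (frame_point p) \<bullet> k = fst p \<bullet> k" .
  qed
  moreover have "w \<bullet> frame_point p = snd p"
    using norm_w by (simp add: inner_frame_point perp_w norm_eq_1)
  ultimately show ?thesis
    by (simp add: frame_coords_def)
qed

lemma frame_point_coords: "frame_point (frame_coords x) = x"
proof -
  have "inj frame_point"
    by (metis frame_coords_point injI)
  then have "surj frame_point"
    by (rule eucl.linear_injective_imp_surjective[OF linear_frame_point]) (simp add: dim)
  then obtain p where "x = frame_point p"
    by blast
  then show ?thesis
    by (simp add: frame_coords_point)
qed

lemma inner_eq_frame_coords: "u \<bullet> x = perp_coords b u \<bullet> perp_coords b x + (w \<bullet> u) * (w \<bullet> x)"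
  using inner_frame_point[of u "frame_coords x"] unfolding frame_point_coords by (simp add: frame_coords_def)

lemma norm_frame_coords: "norm (frame_coords x) = norm x"
proof -
  have "norm (frame_coords x) = sqrt (perp_coords b x \<bullet> perp_coords b x + (w \<bullet> x) * (w \<bullet> x))"
    unfolding frame_coords_def norm_Pair power2_norm_eq_inner by simp
  then show ?thesis
    by (metis inner_eq_frame_coords norm_eq_sqrt_inner)
qed

lemma distr_std_gaussian_frame_coords: "distr std_gaussian borel frame_coords = std_gaussian"
  by (rule distr_std_gaussian_linear_isometry[OF linear_frame_coords norm_frame_coords]) (simp add: dim)

lemma emeasure_std_gaussian_perp_slab:
  assumes [measurable]: "A \<in> sets borel" "C \<in> sets borel"
  shows "emeasure std_gaussian {x. perp_coords b x \<in> A \<and> w \<bullet> x \<in> C}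
      = emeasure std_gaussian A * emeasure std_gaussian C"
proof -
  have [measurable]: "frame_coords \<in> borel_measurable borel"
    unfolding frame_coords_def by measurable
  have "A \<times> C \<in> sets (borel :: ('b \<times> real) measure)"
    unfolding borel_prod[symmetric] by simp
  moreover have "frame_coords -` (A \<times> C) = {x. perp_coords b x \<in> A \<and> w \<bullet> x \<in> C}"
    by (auto simp: frame_coords_def)
  ultimately have "emeasure (distr std_gaussian borel frame_coords) (A \<times> C)
      = emeasure std_gaussian {x. perp_coords b x \<in> A \<and> w \<bullet> x \<in> C}"
    by (simp add: emeasure_distr)
  then show ?thesis
    by (simp add: distr_std_gaussian_frame_coords emeasure_std_gaussian_Times)
qed

lemma distr_perp_coords_uniform_measure_slab:
  assumes [measurable]: "C \<in> sets borel"
    and slab_pos: "emeasure std_gaussian {x. w \<bullet> x \<in> C} \<noteq> 0"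
  shows "distr (uniform_measure std_gaussian {x. w \<bullet> x \<in> C}) borel (perp_coords b) = std_gaussian"
proof (rule measure_eqI)
  interpret G\<^sub>1: prob_space "std_gaussian :: real measure"
    by (rule prob_space_std_gaussian)
  interpret G: prob_space "std_gaussian :: 'b measure"
    by (rule prob_space_std_gaussian)
  have C_pos: "emeasure (std_gaussian :: real measure) C \<noteq> 0"
    using emeasure_std_gaussian_perp_slab[of UNIV C] slab_pos by simp
  have C_fin: "emeasure (std_gaussian :: real measure) C \<noteq> \<infinity>"
    by (simp add: G\<^sub>1.emeasure_eq_measure)
  have UNIV_1: "emeasure (std_gaussian :: 'b measure) UNIV = 1"
    using G.emeasure_space_1 by simp
  fix A assume "A \<in> sets (distr (uniform_measure std_gaussian {x. w \<bullet> x \<in> C}) borel (perp_coords b))"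
  then have [measurable]: "A \<in> sets borel"
    by simp
  have "{x. w \<bullet> x \<in> C} \<in> sets borel"
    by measurable
  moreover have "perp_coords b -` A \<in> sets borel"
    by (rule measurable_sets_borel) measurable
  moreover have "{x. w \<bullet> x \<in> C} \<inter> perp_coords b -` A = {x. perp_coords b x \<in> A \<and> w \<bullet> x \<in> C}"
    by auto
  ultimately have "emeasure (distr (uniform_measure std_gaussian {x. w \<bullet> x \<in> C}) borel (perp_coords b)) A
      = emeasure std_gaussian A * emeasure std_gaussian C / (emeasure std_gaussian (UNIV :: 'b set) * emeasure std_gaussian C)"
    using emeasure_std_gaussian_perp_slab[of A C] emeasure_std_gaussian_perp_slab[of UNIV C]
    by (simp add: emeasure_distr)
  also have "\<dots> = emeasure std_gaussian A"
    using C_pos C_fin by (simp add: UNIV_1 ennreal_mult_divide_eq)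
  finally show "emeasure (distr (uniform_measure std_gaussian {x. w \<bullet> x \<in> C}) borel (perp_coords b)) A
      = emeasure std_gaussian A" .
qed simp

lemma ex_perp_halfspace_subset:
  assumes norm_u: "norm u = 1" and pos: "0 < w \<bullet> u" and "s \<le> t"
  defines "u' \<equiv> perp_coords b u /\<^sub>R norm (perp_coords b u)"
  shows "\<exists>s'. \<bar>s'\<bar> \<le> \<bar>s\<bar> \<and> (\<forall>x. t \<le> w \<bullet> x \<longrightarrow> s' \<le> u' \<bullet> perp_coords b x \<longrightarrow> s \<le> u \<bullet> x)"
proof -
  define a where "a = w \<bullet> u"
  define c where "c = norm (perp_coords b u)"
  \<comment> \<open>If \<open>c = 0\<close> then \<open>u = w\<close>, and division by zero makes \<open>s' = 0\<close>.\<close>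
  define s' where "s' = s * (1 - a) / c"
  have decompose: "u \<bullet> x = perp_coords b u \<bullet> perp_coords b x + a * (w \<bullet> x)" for x
    unfolding a_def by (rule inner_eq_frame_coords)
  have "1 = u \<bullet> u"
    using norm_u by (simp add: norm_eq_1)
  also have "\<dots> = c\<^sup>2 + a\<^sup>2"
    unfolding c_def power2_norm_eq_inner decompose[of u] by (simp add: a_def power2_eq_square)
  finally have sum_squares: "c\<^sup>2 + a\<^sup>2 = 1"
    by simp
  have "0 < a" "0 \<le> c"
    using pos by (simp_all add: a_def c_def)
  then have "\<bar>s'\<bar> \<le> \<bar>s\<bar>"
    unfolding s'_def using sum_squares by (rule abs_threshold_le)
  moreover have "s \<le> u \<bullet> x" if "t \<le> w \<bullet> x" "s' \<le> u' \<bullet> perp_coords b x" for x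
  proof (cases "c = 0")
    case True
    then have "a = 1" "perp_coords b u = 0"
      using sum_squares \<open>0 < a\<close> by (simp_all add: c_def power2_eq_1_iff)
    then show ?thesis
      using that(1) \<open>s \<le> t\<close> decompose[of x] by simp
  next
    case False
    then have "0 < c"
      using \<open>0 \<le> c\<close> by simp
    have "u' \<bullet> perp_coords b x = (perp_coords b u \<bullet> perp_coords b x) / c"
      by (simp add: u'_def c_def[symmetric] divide_inverse mult.commute)
    then have "s * (1 - a) \<le> perp_coords b u \<bullet> perp_coords b x"
      using that(2) \<open>0 < c\<close> by (simp add: s'_def divide_le_cancel)
    moreover have "a * s \<le> a * (w \<bullet> x)"
      using that(1) \<open>s \<le> t\<close> \<open>0 < a\<close> by simp
    moreover have "s = s * (1 - a) + a * s"
      by (simp add: algebra_simps)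
    ultimately show ?thesis
      using decompose[of x] by linarith
  qed
  ultimately show ?thesis
    by blast
qed

end

section \<open>Conditioning on a halfspace and projecting\<close>

lemma distr_uniform_measure_vimage:
  assumes f: "f \<in> M \<rightarrow>\<^sub>M N" and A: "A \<in> sets N"
  shows "distr (uniform_measure M (f -` A \<inter> space M)) N f = uniform_measure (distr M N f) A"
proof (rule measure_eqI)
  have f_uniform: "f \<in> uniform_measure M (f -` A \<inter> space M) \<rightarrow>\<^sub>M N"
    using f by (simp add: measurable_cong_sets[OF sets_uniform_measure refl])
  fix C assume "C \<in> sets (distr (uniform_measure M (f -` A \<inter> space M)) N f)"
  then have C: "C \<in> sets N"
    by simp
  have "(f -` A \<inter> space M) \<inter> (f -` C \<inter> space M) = f -` (A \<inter> C) \<inter> space M"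
    by auto
  then show "emeasure (distr (uniform_measure M (f -` A \<inter> space M)) N f) C
      = emeasure (uniform_measure (distr M N f) A) C"
    using f A C by (simp add: emeasure_distr[OF f_uniform] emeasure_distr[OF f] measurable_sets)
qed simp

lemma (in prob_space) measure_distr_uniform_measure:
  assumes S: "S \<in> events" "prob S \<noteq> 0" and g: "g \<in> M \<rightarrow>\<^sub>M N" and E: "E \<in> sets N"
  shows "measure (distr (uniform_measure M S) N g) E = prob (S \<inter> g -` E) / prob S"
proof -
  have g_uniform: "g \<in> uniform_measure M S \<rightarrow>\<^sub>M N"
    using g by (simp add: measurable_cong_sets[OF sets_uniform_measure refl])
  have "measure (distr (uniform_measure M S) N g) E = measure (uniform_measure M S) (g -` E \<inter> space M)"
    using E by (simp add: measure_distr[OF g_uniform])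
  also have "\<dots> = prob (S \<inter> (g -` E \<inter> space M)) / prob S"
    using S measurable_sets[OF g E] by (simp add: emeasure_eq_measure)
  also have "S \<inter> (g -` E \<inter> space M) = S \<inter> g -` E"
    using sets.sets_into_space[OF S(1)] by auto
  finally show ?thesis .
qed

lemma borel_measurable_hsign[measurable]: "hsign \<in> borel_measurable borel"
  unfolding hsign_def by measurable

lemma hsign_eq_1_iff[simp]: "hsign z = 1 \<longleftrightarrow> 0 \<le> z"
  by (simp add: hsign_def)

locale conditioned_projection = prob_space D
  for D :: "('a::euclidean_space \<times> real) measure" +
  fixes B :: "'a set" and P :: "'a \<Rightarrow> 'b::euclidean_space"
  assumes sets_D: "sets D = sets borel"
    and B_borel[measurable]: "B \<in> sets borel"
    and P_borel[measurable]: "P \<in> borel_measurable borel"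
    and B_nonnull: "prob (B \<times> UNIV) \<noteq> 0"
begin

definition conditioned :: "('b \<times> real) measure" where
  "conditioned = distr (uniform_measure D (B \<times> UNIV)) borel (\<lambda>(x, y). (P x, y))"

lemma space_D: "space D = UNIV"
  using sets_eq_imp_space_eq[OF sets_D] by simp

lemma measurable_D[measurable]: "(\<lambda>(x, y). (P x, y)) \<in> D \<rightarrow>\<^sub>M borel" "fst \<in> D \<rightarrow>\<^sub>M borel"
  unfolding measurable_cong_sets[OF sets_D refl] borel_prod[symmetric] by measurable

lemma B_events: "B \<times> UNIV \<in> events"
  unfolding sets_D borel_prod[symmetric] by measurable

lemma measure_conditioned:
  assumes "E \<in> sets borel"
  shows "measure conditioned E = prob ((B \<times> UNIV) \<inter> (\<lambda>(x, y). (P x, y)) -` E) / prob (B \<times> UNIV)"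
  unfolding conditioned_def using B_events B_nonnull assms by (intro measure_distr_uniform_measure) auto

lemma distr_fst_conditioned:
  "distr conditioned borel fst = distr (uniform_measure (distr D borel fst) B) borel P"
proof -
  have [measurable]: "fst \<in> (borel :: ('b \<times> real) measure) \<rightarrow>\<^sub>M borel"
    unfolding borel_prod[symmetric] by (rule measurable_fst)
  have B_fst: "B \<times> UNIV = fst -` B \<inter> space D"
    by (auto simp: space_D)
  have "distr conditioned borel fst = distr (uniform_measure D (B \<times> UNIV)) borel (fst \<circ> (\<lambda>(x, y). (P x, y)))"
    unfolding conditioned_def by (rule distr_distr) measurable
  also have "fst \<circ> (\<lambda>(x, y). (P x, y)) = P \<circ> fst"
    by auto
  also have "distr (uniform_measure D (B \<times> UNIV)) borel (P \<circ> fst)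
      = distr (distr (uniform_measure D (fst -` B \<inter> space D)) borel fst) borel P"
    unfolding B_fst by (rule distr_distr[symmetric]) measurable
  finally show ?thesis
    by (simp add: distr_uniform_measure_vimage)
qed

lemma emeasure_distr_fst_B: "emeasure (distr D borel fst) B = prob (B \<times> UNIV)"
proof -
  have "B \<times> UNIV = fst -` B \<inter> space D"
    by (auto simp: space_D)
  then show ?thesis
    by (simp add: emeasure_distr emeasure_eq_measure)
qed

lemma prob_label_le_conditioned: "prob (B \<times> {y}) \<le> measure conditioned {z. snd z = y}"
proof -
  have "{z :: 'b \<times> real. snd z = y} = UNIV \<times> {y}"
    by auto
  then have "{z :: 'b \<times> real. snd z = y} \<in> sets borel"
    unfolding borel_prod[symmetric] by simp
  moreover have "(B \<times> UNIV) \<inter> (\<lambda>(x, y). (P x, y)) -` {z. snd z = y} = B \<times> {y}"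
    by auto
  ultimately have "measure conditioned {z. snd z = y} = prob (B \<times> {y}) / prob (B \<times> UNIV)"
    by (simp add: measure_conditioned)
  moreover have "0 < prob (B \<times> UNIV)"
    using B_nonnull by (simp add: zero_less_measure_iff)
  ultimately show ?thesis
    by (simp add: le_divide_eq mult_left_le)
qed

lemma reliable_conditioned:
  assumes "reliable D f" and [measurable]: "f \<in> borel_measurable borel" "h \<in> borel_measurable borel"
    and h_imp_f: "\<forall>x\<in>B. h (P x) = 1 \<longrightarrow> f x = 1"
  shows "reliable conditioned h"
proof -
  let ?E = "{(x, y). h x = 1 \<and> y = (-1::real)}"
  let ?F = "{(x, y). f x = 1 \<and> y = (-1::real)}"
  have "?E = {x. h x = 1} \<times> {-1}"
    by auto
  then have E_sets: "?E \<in> sets borel"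
    unfolding borel_prod[symmetric] by simp
  have "?F = {x. f x = 1} \<times> {-1}"
    by auto
  then have "?F \<in> events"
    unfolding sets_D borel_prod[symmetric] by simp
  moreover have "(B \<times> UNIV) \<inter> (\<lambda>(x, y). (P x, y)) -` ?E \<subseteq> ?F"
    using h_imp_f by auto
  ultimately have "prob ((B \<times> UNIV) \<inter> (\<lambda>(x, y). (P x, y)) -` ?E) \<le> prob ?F"
    by (intro finite_measure_mono)
  then have "prob ((B \<times> UNIV) \<inter> (\<lambda>(x, y). (P x, y)) -` ?E) = 0"
    using \<open>reliable D f\<close> unfolding reliable_def by (simp add: measure_le_0_iff)
  then show ?thesis
    unfolding reliable_def measure_conditioned[OF E_sets] by simp
qed

end

theorem lemma2p5:
  fixes D :: "('a::euclidean_space \<times> real) measure"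
    and b :: "'b::euclidean_space \<Rightarrow> 'a"
    and \<epsilon> t t_star :: real and w w_star :: 'a
  assumes eps: "0 < \<epsilon>" "\<epsilon> < 1"
    and D_prob: "prob_space D"
    and D_sets: "sets D = sets (borel :: ('a \<times> real) measure)"
    and D_labels: "AE z in D. snd z \<in> {-1, 1}"
    and D_marg: "distr D borel fst = std_gaussian"
    and w_star_unit: "norm w_star = 1"
    and D_rel: "reliable D (\<lambda>x. hsign (w_star \<bullet> x - t_star))"
    and w_unit: "norm w = 1"
    and w_pos: "w \<bullet> w_star > 0"
    and t_range: "0 \<le> t - t_star" "t - t_star \<le> \<epsilon> / 100"
    and h_bad: "\<not> R_plus (\<lambda>x. hsign (w \<bullet> x - t)) D \<le> \<epsilon> / 2"
    and dim: "DIM('a) = DIM('b) + 1"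
    and b_orth: "\<forall>i\<in>Basis. b i \<bullet> w = 0"
    and b_orthonormal: "\<forall>i\<in>Basis. \<forall>j\<in>Basis. b i \<bullet> b j = (if i = j then 1 else 0)"
  shows
    "let B = {x. w \<bullet> x - t \<ge> 0};
         D' = distr (uniform_measure D (B \<times> UNIV)) (borel :: ('b \<times> real) measure)
                (\<lambda>(x, y). (perp_coords b x, y));
         w' = perp_coords b w_star /\<^sub>R norm (perp_coords b w_star)
     in distr D' borel fst = std_gaussian
        \<and> (\<exists>t'. \<bar>t'\<bar> \<le> \<bar>t_star\<bar> \<and> reliable D' (\<lambda>x. hsign (w' \<bullet> x - t')))
        \<and> measure D' {z. snd z = -1} \<ge> \<epsilon> / 2"
proof -
  interpret frame: orthonormal_frame b w
    using w_unit dim b_orth b_orthonormal by unfold_locales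
  interpret D: prob_space D
    by (rule D_prob)
  define B where "B = {x. w \<bullet> x - t \<ge> 0}"
  define w' where "w' = perp_coords b w_star /\<^sub>R norm (perp_coords b w_star)"
  have B_slab: "B = {x. w \<bullet> x \<in> {t..}}"
    by (auto simp: B_def)
  have "R_plus (\<lambda>x. hsign (w \<bullet> x - t)) D = D.prob (B \<times> {-1})"
    unfolding R_plus_def by (rule arg_cong) (auto simp: B_def)
  then have mass_bad: "\<epsilon> / 2 < D.prob (B \<times> {-1})"
    using h_bad by simp
  also have "\<dots> \<le> D.prob (B \<times> UNIV)"
    by (rule D.finite_measure_mono) (auto simp: D_sets borel_prod[symmetric] B_def)
  finally interpret cond: conditioned_projection D B "perp_coords b"
    using D_sets eps by unfold_locales (auto simp: B_slab)
  have "emeasure std_gaussian B \<noteq> 0"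
    using cond.emeasure_distr_fst_B cond.B_nonnull by (simp add: D_marg)
  then have "distr cond.conditioned borel fst = std_gaussian"
    unfolding cond.distr_fst_conditioned D_marg unfolding B_slab
    by (intro frame.distr_perp_coords_uniform_measure_slab) auto
  moreover obtain t' where "\<bar>t'\<bar> \<le> \<bar>t_star\<bar>"
    and "\<forall>x. t \<le> w \<bullet> x \<longrightarrow> t' \<le> w' \<bullet> perp_coords b x \<longrightarrow> t_star \<le> w_star \<bullet> x"
    using frame.ex_perp_halfspace_subset[OF w_star_unit w_pos, of t_star t] t_range(1)
    unfolding w'_def by auto
  moreover from this(2) have "reliable cond.conditioned (\<lambda>x. hsign (w' \<bullet> x - t'))"
    by (intro cond.reliable_conditioned[OF D_rel]) (auto simp: B_def)
  moreover have "\<epsilon> / 2 \<le> measure cond.conditioned {z. snd z = -1}"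
    using mass_bad cond.prob_label_le_conditioned[of "-1"] by linarith
  ultimately show ?thesis
    unfolding Let_def B_def[symmetric] w'_def[symmetric] cond.conditioned_def[symmetric] by blast
qed

end
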